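(* Let $T$ be an embedded plane tropical curve with dual subdivision $S_T$ of its Newton polygon $\Delta$. Let $\delta_1,\dots,\delta_k$ be all the triangles and parallelograms of $S_T$ and let $\delta_{k+1},\dots,\delta_l$ be all the other polygons of $S_T$, listed in any order. Then $$rk(T)\le\#Vert(S_T)-1-\sum_{\delta\in\{\delta_1,\dots,\delta_k\}}(\#Vert(\delta)-3)-\sum_{i=k+1}^{l}\Big(\#Vert(\delta_i)-\max\Big\{3,\ \#\Big(Vert(\delta_i)\cap\bigcup_{j<i}Vert(\delta_j)\Big)\Big\}\Big).$$
   Context: An embedded plane tropical curve $T$ is the corner locus of $\max_{\omega\in\Delta\cap\mathbb{Z}^2}(\langle\omega,x\rangle+c_\omega)$, $x\in\mathbb{R}^2$, with Newton polygon $\Delta$; $S_T$ is the dual subdivision (the regular subdivision of $\Delta$ induced by $\omega\mapsto c_\omega$), $Vert(S_T)$ its vertex set and $Vert(\delta)$ the vertex set of a polygon $\delta$. The rank $rk(T)$ is the dimension of the set of vectors $(c_\omega)_{\omega\in Vert(S_T)}$, modulo adding a common constant, that induce exactly the subdivision $S_T$ (the space of curves with the same dual subdivision). *)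

theory Defs
  imports "HOL-Analysis.Analysis" "HOL-Library.Function_Algebras"
begin

definition rp :: "int \<times> int \<Rightarrow> real \<times> real" where
  "rp w = (real_of_int (fst w), real_of_int (snd w))"

text \<open>The tropical polynomial with (finite) support A and coefficients c, i.e.
  max over w in A of (<w,x> + c w).  Monomials outside A have coefficient minus infinity.\<close>

definition trop_eval :: "(int \<times> int) set \<Rightarrow> (int \<times> int \<Rightarrow> real) \<Rightarrow> real \<times> real \<Rightarrow> real" where
  "trop_eval A c x = Max ((\<lambda>w. fst (rp w) * fst x + snd (rp w) * snd x + c w) ` A)"

definition trop_argmax :: "(int \<times> int) set \<Rightarrow> (int \<times> int \<Rightarrow> real) \<Rightarrow> real \<times> real \<Rightarrow> (int \<times> int) set" where
  "trop_argmax A c x = {w \<in> A. fst (rp w) * fst x + snd (rp w) * snd x + c w = trop_eval A c x}"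

text \<open>This is the regular subdivision induced by c.\<close>

definition dual_polys :: "(int \<times> int) set \<Rightarrow> (int \<times> int \<Rightarrow> real) \<Rightarrow> (real \<times> real) set set" where
  "dual_polys A c = {convex hull (rp ` trop_argmax A c x) | x.
                       aff_dim (convex hull (rp ` trop_argmax A c x)) = 2}"

definition poly_vert :: "(real \<times> real) set \<Rightarrow> (int \<times> int) set" where
  "poly_vert P = {w. rp w extreme_point_of P}"

definition subdiv_vert :: "(int \<times> int) set \<Rightarrow> (int \<times> int \<Rightarrow> real) \<Rightarrow> (int \<times> int) set" where
  "subdiv_vert A c = (\<Union>P \<in> dual_polys A c. poly_vert P)"

definition is_triangle :: "(real \<times> real) set \<Rightarrow> bool" where
  "is_triangle P \<longleftrightarrow> card (poly_vert P) = 3"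

definition is_parallelogram :: "(real \<times> real) set \<Rightarrow> bool" where
  "is_parallelogram P \<longleftrightarrow> (\<exists>p q r s. poly_vert P = {p, q, r, s} \<and> card {p, q, r, s} = 4
                                   \<and> p + r = q + s)"

text \<open>Coefficient vectors indexed by V are functions vanishing outside V; they form a
  real vector space under pointwise operations.\<close>

definition fscale :: "real \<Rightarrow> ('a \<Rightarrow> real) \<Rightarrow> ('a \<Rightarrow> real)" where
  "fscale r f = (\<lambda>x. r * f x)"

definition same_subdiv_coeffs :: "(int \<times> int) set \<Rightarrow> (int \<times> int \<Rightarrow> real) \<Rightarrow> (int \<times> int \<Rightarrow> real) set" where
  "same_subdiv_coeffs A c =
     (let V = subdiv_vert A c in
      {c'. (\<forall>w. w \<notin> V \<longrightarrow> c' w = 0) \<and> dual_polys V c' = dual_polys A c})"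

text \<open>Rank: dimension of that set modulo adding a common constant (on V), i.e. the
  dimension of the direction space of its affine hull, taken in the quotient by the
  constant vector.\<close>

definition trop_rank :: "(int \<times> int) set \<Rightarrow> (int \<times> int \<Rightarrow> real) \<Rightarrow> int" where
  "trop_rank A c =
     (let V = subdiv_vert A c; R = same_subdiv_coeffs A c in
      int (vector_space.dim fscale
             ({c1 - c2 | c1 c2. c1 \<in> R \<and> c2 \<in> R} \<union> {(\<lambda>w. if w \<in> V then 1 else 0)})) - 1)"

end

theory Submission
  imports Defs
begin

text \<open>Coefficient vectors of curves with the subdivision \<open>S\<^sub>T\<close>, and the constant vector,
  lie in the space \<open>L\<close> of functions on \<open>Vert(S\<^sub>T)\<close> that are affine on the vertex set of
  every cell, so \<open>rk(T) \<le> dim L - 1\<close>. A function in \<open>L\<close> is determined by its values on a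
  set of free vertices obtained by discarding forced vertices cell by cell: in a large cell
  all but \<open>max 3 #old\<close> of its vertices, since three non-collinear values fix an affine
  function; in a parallelogram \<open>pqrs\<close> one vertex, forced by \<open>f p + f r = f q + f s\<close>.
  The discarded vertex of a parallelogram is chosen so that the parallelogram comes first,
  in the lexicographic order of dual vertices, among the cells containing it; this makes the
  dependencies acyclic.\<close>

interpretation fs: vector_space fscale
  by unfold_locales (auto simp: fscale_def fun_eq_iff algebra_simps)

lemma fscale_apply [simp]: "fscale r f x = r * f x"
  by (simp add: fscale_def)

lemma rp_eq_iff [simp]: "rp u = rp v \<longleftrightarrow> u = v"
  by (auto simp: rp_def prod_eq_iff)

lemma rp_add: "rp (u + v) = rp u + rp v"
  by (simp add: rp_def)

section \<open>Affine functions on the vertices of a polygon\<close>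

lemma collinear_if_on_line:
  fixes S :: "(real \<times> real) set"
  assumes "n \<noteq> 0" and "\<And>t. t \<in> S \<Longrightarrow> n \<bullet> t + \<gamma> = 0"
  shows "collinear S"
  unfolding collinear_def
proof (intro exI[of _ "(- snd n, fst n)"] ballI)
  fix x y assume "x \<in> S" "y \<in> S"
  then have "n \<bullet> x + \<gamma> = 0" "n \<bullet> y + \<gamma> = 0" using assms(2) by auto
  then have orth: "fst n * (fst x - fst y) + snd n * (snd x - snd y) = 0"
    by (simp add: inner_prod_def algebra_simps)
  have N: "fst n * fst n + snd n * snd n \<noteq> 0"
    using assms(1) by (metis prod_eq_iff sum_squares_eq_zero_iff zero_prod_def fst_zero snd_zero)
  let ?t = "(fst n * (snd x - snd y) - snd n * (fst x - fst y)) / (fst n * fst n + snd n * snd n)"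
  have "x - y = ?t *\<^sub>R (- snd n, fst n)"
    using orth N by (auto simp: prod_eq_iff field_simps) algebra+
  then show "\<exists>t. x - y = t *\<^sub>R (- snd n, fst n)" by blast
qed

lemma not_extreme_point_if_between:
  assumes "between (a, b) x" "x \<noteq> a" "x \<noteq> b" "a \<in> S" "b \<in> S"
  shows "\<not> x extreme_point_of S"
  using assms by (auto simp: extreme_point_of_def between_mem_segment open_segment_def)

lemma affine_zero_at_three_vertices:
  assumes "{u, v, w} \<subseteq> poly_vert P" "u \<noteq> v" "u \<noteq> w" "v \<noteq> w"
    and "\<And>t. t \<in> {u, v, w} \<Longrightarrow> n \<bullet> rp t + \<gamma> = 0"
  shows "n = 0"
proof (rule ccontr)
  assume "n \<noteq> 0"
  have "collinear {rp u, rp v, rp w}"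
    by (rule collinear_if_on_line[OF \<open>n \<noteq> 0\<close>, of _ \<gamma>]) (use assms(5) in blast)
  then have "between (rp v, rp w) (rp u) \<or> between (rp w, rp u) (rp v) \<or> between (rp u, rp v) (rp w)"
    by (simp add: collinear_between_cases)
  moreover have "rp u extreme_point_of P" "rp v extreme_point_of P" "rp w extreme_point_of P"
    using assms(1) by (auto simp: poly_vert_def)
  moreover from this have "rp u \<in> P" "rp v \<in> P" "rp w \<in> P"
    by (auto simp: extreme_point_of_def)
  ultimately show False
    using not_extreme_point_if_between assms(2-4) by (metis rp_eq_iff)
qed

section \<open>Lexicographically positive cones\<close>

definition lex_pos :: "real \<times> real \<Rightarrow> bool" where
  "lex_pos z \<longleftrightarrow> 0 < fst z \<or> (fst z = 0 \<and> 0 < snd z)"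

definition lex_less :: "real \<times> real \<Rightarrow> real \<times> real \<Rightarrow> bool" where
  "lex_less x y \<longleftrightarrow> lex_pos (y - x)"

lemma lex_less_irrefl: "\<not> lex_less x x"
  by (simp add: lex_less_def lex_pos_def)

lemma lex_less_asym: "lex_less x y \<Longrightarrow> \<not> lex_less y x"
  by (auto simp: lex_less_def lex_pos_def)

lemma lex_less_trans: "lex_less x y \<Longrightarrow> lex_less y z \<Longrightarrow> lex_less x z"
  by (auto simp: lex_less_def lex_pos_def)

lemma lex_pos_scaleR_iff: "0 < t \<Longrightarrow> lex_pos (t *\<^sub>R z) \<longleftrightarrow> lex_pos z"
  by (auto simp: lex_pos_def zero_less_mult_iff)

lemma lex_pos_sign: "z \<noteq> 0 \<Longrightarrow> \<exists>e. (e = 1 \<or> e = -1) \<and> lex_pos (e *\<^sub>R z)"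
  by (cases "lex_pos z") (auto simp: lex_pos_def prod_eq_iff)

lemma lex_pos_nonneg_combination:
  assumes "lex_pos u" "lex_pos w" "0 \<le> s" "0 \<le> t" "s \<noteq> 0 \<or> t \<noteq> 0"
  shows "lex_pos (s *\<^sub>R u + t *\<^sub>R w)"
  using assms unfolding lex_pos_def
  by (auto simp: add_pos_nonneg add_nonneg_pos mult_pos_pos zero_less_mult_iff
      order.order_iff_strict mult_nonneg_nonneg)

text \<open>Cramer's rule gives \<open>d z = (a \<bullet> z) u + (b \<bullet> z) w\<close> with \<open>(u, w)\<close> the columns
  of the adjugate; choosing the signs so that \<open>\<pm> d u\<close> and \<open>\<pm> d w\<close> are lexicographically
  positive makes \<open>d\<^sup>2 z\<close> a nonnegative combination of them.\<close>

lemma cone_lex_pos: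
  fixes a b :: "real \<times> real"
  assumes det: "fst a * snd b - snd a * fst b \<noteq> 0"
  obtains e1 e2 :: real where "e1 = 1 \<or> e1 = -1" "e2 = 1 \<or> e2 = -1"
    and "\<And>z. z \<noteq> 0 \<Longrightarrow> 0 \<le> e1 * (a \<bullet> z) \<Longrightarrow> 0 \<le> e2 * (b \<bullet> z) \<Longrightarrow> lex_pos z"
proof -
  define d where "d = fst a * snd b - snd a * fst b"
  define u where "u = (snd b, - fst b)"
  define w where "w = (- snd a, fst a)"
  have adj: "d *\<^sub>R z = (a \<bullet> z) *\<^sub>R u + (b \<bullet> z) *\<^sub>R w" for z
    by (simp add: d_def u_def w_def inner_prod_def prod_eq_iff algebra_simps)
  have "u \<noteq> 0" "w \<noteq> 0"
    using det by (auto simp: u_def w_def prod_eq_iff)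
  with det obtain e1 e2 :: real where e: "e1 = 1 \<or> e1 = -1" "e2 = 1 \<or> e2 = -1"
    and pos: "lex_pos (e1 *\<^sub>R (d *\<^sub>R u))" "lex_pos (e2 *\<^sub>R (d *\<^sub>R w))"
    using lex_pos_sign[of "d *\<^sub>R u"] lex_pos_sign[of "d *\<^sub>R w"] by (auto simp: d_def)
  show thesis
  proof (rule that[OF e])
    fix z :: "real \<times> real"
    assume z: "z \<noteq> 0" "0 \<le> e1 * (a \<bullet> z)" "0 \<le> e2 * (b \<bullet> z)"
    have "(d * d) *\<^sub>R z = d *\<^sub>R ((a \<bullet> z) *\<^sub>R u + (b \<bullet> z) *\<^sub>R w)"
      by (simp flip: adj)
    also have "\<dots> = (e1 * (a \<bullet> z)) *\<^sub>R (e1 *\<^sub>R (d *\<^sub>R u)) + (e2 * (b \<bullet> z)) *\<^sub>R (e2 *\<^sub>R (d *\<^sub>R w))"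
      using e by (elim disjE) (simp_all add: scaleR_add_right mult.commute)
    finally have "(d * d) *\<^sub>R z = \<dots>" .
    moreover have "e1 * (a \<bullet> z) \<noteq> 0 \<or> e2 * (b \<bullet> z) \<noteq> 0"
      using adj[of z] z(1) det e by (auto simp: d_def)
    ultimately have "lex_pos ((d * d) *\<^sub>R z)"
      using lex_pos_nonneg_combination[OF pos z(2,3)] by simp
    moreover have "0 < d * d"
      using det by (simp flip: d_def add: not_square_less_zero order_less_le)
    ultimately show "lex_pos z"
      using lex_pos_scaleR_iff by blast
  qed
qed

section \<open>Dual vertices and private vertices\<close>

lemma trop_value_eq_inner: "fst (rp w) * fst x + snd (rp w) * snd x = rp w \<bullet> x"
  by (simp add: inner_prod_def)

lemma trop_argmax_eq: "v \<in> trop_argmax A c x \<Longrightarrow> rp v \<bullet> x + c v = trop_eval A c x"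
  by (simp add: trop_argmax_def trop_value_eq_inner)

lemma trop_argmax_subset: "trop_argmax A c x \<subseteq> A"
  by (auto simp: trop_argmax_def)

lemma trop_argmax_ge:
  assumes "finite A" "v \<in> trop_argmax A c x" "w \<in> A"
  shows "rp w \<bullet> x + c w \<le> rp v \<bullet> x + c v"
proof -
  have "rp w \<bullet> x + c w \<le> trop_eval A c x"
    unfolding trop_eval_def trop_value_eq_inner[symmetric] using assms by (intro Max_ge) auto
  with trop_argmax_eq[OF assms(2)] show ?thesis by simp
qed

lemma poly_vert_convex_hull_subset: "poly_vert (convex hull (rp ` S)) \<subseteq> S"
  by (auto simp: poly_vert_def dest: extreme_point_of_convex_hull)

definition dual_vertex :: "(int \<times> int) set \<Rightarrow> (int \<times> int \<Rightarrow> real) \<Rightarrow> (real \<times> real) set \<Rightarrow> real \<times> real"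
  where "dual_vertex A c P = (SOME x. P = convex hull (rp ` trop_argmax A c x))"

lemma dual_polys_eq_hull_dual_vertex:
  "P \<in> dual_polys A c \<Longrightarrow> P = convex hull (rp ` trop_argmax A c (dual_vertex A c P))"
  unfolding dual_vertex_def by (rule someI_ex) (auto simp: dual_polys_def)

lemma poly_vert_subset_argmax:
  "P \<in> dual_polys A c \<Longrightarrow> poly_vert P \<subseteq> trop_argmax A c (dual_vertex A c P)"
  by (metis dual_polys_eq_hull_dual_vertex poly_vert_convex_hull_subset)

lemma poly_vert_subset: "P \<in> dual_polys A c \<Longrightarrow> poly_vert P \<subseteq> A"
  using poly_vert_subset_argmax trop_argmax_subset by blast

lemma dual_vertex_inject:
  "P \<in> dual_polys A c \<Longrightarrow> Q \<in> dual_polys A c \<Longrightarrow> dual_vertex A c P = dual_vertex A c Q \<Longrightarrow> P = Q"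
  by (metis dual_polys_eq_hull_dual_vertex)

lemma edge_inner_dual_vertex_diff_nonneg:
  assumes "finite A" "P \<in> dual_polys A c" "Q \<in> dual_polys A c"
    and "v \<in> poly_vert P" "v \<in> poly_vert Q" "w \<in> poly_vert P"
  shows "0 \<le> (rp v - rp w) \<bullet> (dual_vertex A c Q - dual_vertex A c P)"
proof -
  have "v \<in> trop_argmax A c (dual_vertex A c P)" "w \<in> trop_argmax A c (dual_vertex A c P)"
    and vQ: "v \<in> trop_argmax A c (dual_vertex A c Q)"
    using assms(4-6) poly_vert_subset_argmax[OF assms(2)] poly_vert_subset_argmax[OF assms(3)] by auto
  then have "rp v \<bullet> dual_vertex A c P + c v = rp w \<bullet> dual_vertex A c P + c w"
    by (simp add: trop_argmax_eq)
  moreover have "rp w \<bullet> dual_vertex A c Q + c w \<le> rp v \<bullet> dual_vertex A c Q + c v"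
    using trop_argmax_ge[OF assms(1) vQ] poly_vert_subset[OF assms(2)] assms(6) by blast
  ultimately show ?thesis
    by (simp add: inner_diff_left inner_diff_right)
qed

definition private_vertex :: "(int \<times> int) set \<Rightarrow> (int \<times> int \<Rightarrow> real) \<Rightarrow> (real \<times> real) set \<Rightarrow> int \<times> int \<Rightarrow> bool"
  where "private_vertex A c P v \<longleftrightarrow> v \<in> poly_vert P \<and>
    (\<forall>Q \<in> dual_polys A c. v \<in> poly_vert Q \<longrightarrow> Q \<noteq> P \<longrightarrow> lex_less (dual_vertex A c P) (dual_vertex A c Q))"

lemma parallelogram_edges_at_vertex:
  fixes e1 e2 :: real
  assumes "poly_vert P = {p, q, r, s}" "p + r = q + s" "e1 = 1 \<or> e1 = -1" "e2 = 1 \<or> e2 = -1"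
  obtains v w1 w2 where "{v, w1, w2} \<subseteq> poly_vert P"
    "rp v - rp w1 = e1 *\<^sub>R (rp q - rp p)" "rp v - rp w2 = e2 *\<^sub>R (rp s - rp p)"
proof -
  have r: "rp r = rp q + rp s - rp p"
    using arg_cong[OF assms(2), of rp] by (simp add: rp_add algebra_simps)
  from assms(3,4) consider "e1 = 1" "e2 = 1" | "e1 = 1" "e2 = -1" | "e1 = -1" "e2 = 1" | "e1 = -1" "e2 = -1"
    by blast
  then show thesis
  proof cases
    case 1 then show thesis using that[of r s q] assms(1) r by simp
  next
    case 2 then show thesis using that[of q p r] assms(1) r by simp
  next
    case 3 then show thesis using that[of s r p] assms(1) r by simp
  next
    case 4 then show thesis using that[of p q s] assms(1) r by simp
  qed
qed

text \<open>The normal cone of a vertex \<open>v\<close> of \<open>P\<close> contains the differences of dual vertices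
  of cells through \<open>v\<close>. Moving \<open>v\<close> around the parallelogram flips the signs of the two edge
  vectors independently, so by \<open>cone_lex_pos\<close> some vertex has its normal cone inside the
  lexicographically positive half-plane.\<close>

lemma parallelogram_private_vertex:
  assumes "finite A" "P \<in> dual_polys A c" "is_parallelogram P"
  shows "\<exists>v. private_vertex A c P v"
proof -
  obtain p q r s where pqrs: "poly_vert P = {p, q, r, s}" "card {p, q, r, s} = 4" "p + r = q + s"
    using assms(3) unfolding is_parallelogram_def by blast
  have dist: "p \<noteq> q" "p \<noteq> s" "q \<noteq> s"
    using pqrs(2) by (auto simp: card_insert_if split: if_splits)
  define a where "a = rp q - rp p"
  define b where "b = rp s - rp p"
  have "fst a * snd b - snd a * fst b \<noteq> 0"
  proof
    assume "fst a * snd b - snd a * fst b = 0"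
    then have "(- snd a, fst a) \<bullet> rp t + (- (- snd a, fst a) \<bullet> rp p) = 0" if "t \<in> {p, q, s}" for t
      using that by (auto simp: a_def b_def inner_prod_def algebra_simps)
    then have "(- snd a, fst a) = 0"
      using pqrs(1) dist by (intro affine_zero_at_three_vertices[of p q s P]) auto
    then have "q = p"
      by (simp add: a_def rp_def prod_eq_iff)
    with dist show False by simp
  qed
  then obtain e1 e2 :: real where e: "e1 = 1 \<or> e1 = -1" "e2 = 1 \<or> e2 = -1"
    and cone: "\<And>z. z \<noteq> 0 \<Longrightarrow> 0 \<le> e1 * (a \<bullet> z) \<Longrightarrow> 0 \<le> e2 * (b \<bullet> z) \<Longrightarrow> lex_pos z"
    by (rule cone_lex_pos) blast
  obtain v w1 w2 where vw: "{v, w1, w2} \<subseteq> poly_vert P"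
    "rp v - rp w1 = e1 *\<^sub>R a" "rp v - rp w2 = e2 *\<^sub>R b"
    using parallelogram_edges_at_vertex[OF pqrs(1,3) e] unfolding a_def b_def .
  have "lex_less (dual_vertex A c P) (dual_vertex A c Q)"
    if Q: "Q \<in> dual_polys A c" "v \<in> poly_vert Q" "Q \<noteq> P" for Q
  proof -
    let ?z = "dual_vertex A c Q - dual_vertex A c P"
    have "?z \<noteq> 0"
      using dual_vertex_inject[OF assms(2) Q(1)] Q(3) by auto
    moreover have "0 \<le> e1 * (a \<bullet> ?z)" "0 \<le> e2 * (b \<bullet> ?z)"
      using edge_inner_dual_vertex_diff_nonneg[OF assms(1,2) Q(1) _ Q(2), of w1]
        edge_inner_dual_vertex_diff_nonneg[OF assms(1,2) Q(1) _ Q(2), of w2] vw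
      by auto
    ultimately show ?thesis
      unfolding lex_less_def by (rule cone)
  qed
  with vw(1) show ?thesis
    unfolding private_vertex_def by blast
qed

section \<open>Cellwise affine functions\<close>

lemma sum_fun_apply: "(\<Sum>b\<in>B. g b) w = (\<Sum>b\<in>B. (g b :: 'a \<Rightarrow> real) w)"
  by (induction B rule: infinite_finite_induct) auto

lemma restrict_in_span_deltas:
  assumes "finite B"
  shows "(\<lambda>w. if w \<in> B then f w else 0) \<in> fs.span ((\<lambda>b w. if w = b then 1 else 0 :: real) ` B)"
proof -
  have "(\<lambda>w. if w \<in> B then f w else 0) = (\<Sum>b\<in>B. fscale (f b) (\<lambda>w. if w = b then 1 else 0))"
  proof
    fix w
    have "(\<Sum>b\<in>B. f b * (if w = b then 1 else 0)) = (\<Sum>b\<in>B. if b = w then f b else 0)"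
      by (rule sum.cong) auto
    with assms show "(if w \<in> B then f w else 0) = (\<Sum>b\<in>B. fscale (f b) (\<lambda>w. if w = b then 1 else 0)) w"
      by (simp add: sum_fun_apply sum.delta)
  qed
  also have "\<dots> \<in> fs.span ((\<lambda>b w. if w = b then 1 else 0) ` B)"
    by (intro fs.span_sum fs.span_scale fs.span_base) auto
  finally show ?thesis .
qed

lemma dim_le_card_of_determining_set:
  fixes S :: "('a \<Rightarrow> real) set"
  assumes "finite B" and determined: "\<And>f. f \<in> fs.span S \<Longrightarrow> (\<forall>b\<in>B. f b = 0) \<Longrightarrow> f = 0"
  shows "fs.dim S \<le> card B"
proof -
  obtain T where T: "T \<subseteq> S" "fs.independent T" "S \<subseteq> fs.span T" "card T = fs.dim S"
    using fs.basis_exists by blast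
  define r where "r f = (\<lambda>w. if w \<in> B then f w else 0)" for f :: "'a \<Rightarrow> real"
  interpret r: Vector_Spaces.linear fscale fscale r
    by unfold_locales (auto simp: r_def fun_eq_iff)
  have "inj_on r (fs.span T)"
  proof (rule inj_onI)
    fix f g assume fg: "f \<in> fs.span T" "g \<in> fs.span T" and "r f = r g"
    have "f - g \<in> fs.span S"
      using fs.span_diff[OF fg] fs.span_mono[OF T(1)] by blast
    moreover have "(f - g) b = 0" if "b \<in> B" for b
      using fun_cong[OF \<open>r f = r g\<close>, of b] that by (simp add: r_def)
    ultimately show "f = g"
      using determined[of "f - g"] by simp
  qed
  then have "fs.independent (r ` T)"
    by (rule r.independent_injective_image[OF T(2)])
  moreover define D where "D = (\<lambda>b w. if w = b then 1 else 0 :: real) ` B"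
  moreover have "r ` T \<subseteq> fs.span D"
    using restrict_in_span_deltas[OF assms(1)] by (auto simp: r_def D_def)
  ultimately have "card (r ` T) \<le> card D"
    using fs.independent_span_bound[of D "r ` T"] assms(1) by (simp add: D_def)
  also have "\<dots> \<le> card B"
    unfolding D_def using assms(1) by (rule card_image_le)
  finally show ?thesis
    using \<open>inj_on r (fs.span T)\<close> fs.span_superset T(4) by (metis card_image inj_on_subset)
qed

definition cellwise_affine :: "(int \<times> int) set \<Rightarrow> (real \<times> real) set set \<Rightarrow> (int \<times> int \<Rightarrow> real) set"
  where "cellwise_affine V C = {f. (\<forall>w. w \<notin> V \<longrightarrow> f w = 0) \<and>
     (\<forall>P\<in>C. \<exists>n \<gamma>. \<forall>v\<in>poly_vert P. f v = n \<bullet> rp v + \<gamma>)}"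

lemma cellwise_affineI:
  assumes "\<And>w. w \<notin> V \<Longrightarrow> f w = 0"
    and "\<And>P. P \<in> C \<Longrightarrow> \<exists>n \<gamma>. \<forall>v\<in>poly_vert P. f v = n \<bullet> rp v + \<gamma>"
  shows "f \<in> cellwise_affine V C"
  using assms unfolding cellwise_affine_def by blast

lemma cellwise_affineD:
  assumes "f \<in> cellwise_affine V C"
  shows "w \<notin> V \<Longrightarrow> f w = 0"
    and "P \<in> C \<Longrightarrow> \<exists>n \<gamma>. \<forall>v\<in>poly_vert P. f v = n \<bullet> rp v + \<gamma>"
  using assms unfolding cellwise_affine_def by blast+

lemma subspace_cellwise_affine: "fs.subspace (cellwise_affine V C)"
  unfolding fs.subspace_def
proof (intro conjI ballI allI)
  show "0 \<in> cellwise_affine V C"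
    unfolding cellwise_affine_def by (auto simp del: split_paired_Ex intro!: exI[of _ 0])
next
  fix f g assume f: "f \<in> cellwise_affine V C" and g: "g \<in> cellwise_affine V C"
  have "\<exists>n \<gamma>. \<forall>v\<in>poly_vert P. (f + g) v = n \<bullet> rp v + \<gamma>" if "P \<in> C" for P
  proof -
    obtain n1 \<gamma>1 n2 \<gamma>2 where "\<forall>v\<in>poly_vert P. f v = n1 \<bullet> rp v + \<gamma>1" "\<forall>v\<in>poly_vert P. g v = n2 \<bullet> rp v + \<gamma>2"
      using f g \<open>P \<in> C\<close> unfolding cellwise_affine_def by blast
    then show ?thesis
      by (intro exI[of _ "n1 + n2"] exI[of _ "\<gamma>1 + \<gamma>2"]) (simp add: inner_add_left)
  qed
  with f g show "f + g \<in> cellwise_affine V C"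
    unfolding cellwise_affine_def by simp
next
  fix t f assume f: "f \<in> cellwise_affine V C"
  have "\<exists>n \<gamma>. \<forall>v\<in>poly_vert P. fscale t f v = n \<bullet> rp v + \<gamma>" if "P \<in> C" for P
  proof -
    obtain n \<gamma> where "\<forall>v\<in>poly_vert P. f v = n \<bullet> rp v + \<gamma>"
      using f \<open>P \<in> C\<close> unfolding cellwise_affine_def by blast
    then show ?thesis
      by (intro exI[of _ "t *\<^sub>R n"] exI[of _ "t * \<gamma>"]) (simp add: algebra_simps)
  qed
  with f show "fscale t f \<in> cellwise_affine V C"
    unfolding cellwise_affine_def by simp
qed

lemma same_subdiv_coeffs_cellwise_affine:
  assumes "c' \<in> same_subdiv_coeffs A c"
  shows "c' \<in> cellwise_affine (subdiv_vert A c) (dual_polys A c)"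
proof -
  let ?V = "subdiv_vert A c"
  have zero: "\<And>w. w \<notin> ?V \<Longrightarrow> c' w = 0" and cells: "dual_polys ?V c' = dual_polys A c"
    using assms by (auto simp: same_subdiv_coeffs_def Let_def)
  have affine: "\<exists>n \<gamma>. \<forall>v\<in>poly_vert P. c' v = n \<bullet> rp v + \<gamma>" if "P \<in> dual_polys A c" for P
  proof -
    from that cells obtain x where "P = convex hull (rp ` trop_argmax ?V c' x)"
      unfolding dual_polys_def by blast
    then have "\<forall>v\<in>poly_vert P. c' v = (- x) \<bullet> rp v + trop_eval ?V c' x"
      using poly_vert_convex_hull_subset trop_argmax_eq
      by (fastforce simp: inner_commute algebra_simps)
    then show ?thesis by blast
  qed
  from zero affine show ?thesis
    by (rule cellwise_affineI)
qed

lemma indicator_cellwise_affine: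
  "(\<lambda>w. if w \<in> subdiv_vert A c then 1 else 0) \<in> cellwise_affine (subdiv_vert A c) (dual_polys A c)"
proof (rule cellwise_affineI)
  fix P assume "P \<in> dual_polys A c"
  then have "poly_vert P \<subseteq> subdiv_vert A c"
    by (auto simp: subdiv_vert_def)
  then have "\<forall>v\<in>poly_vert P. (if v \<in> subdiv_vert A c then 1 else 0) = (0 :: real \<times> real) \<bullet> rp v + 1"
    by auto
  then show "\<exists>n \<gamma>. \<forall>v\<in>poly_vert P. (if v \<in> subdiv_vert A c then 1 else 0) = n \<bullet> rp v + \<gamma>"
    by blast
qed simp

lemma span_rank_generators_subset:
  "fs.span ({c1 - c2 | c1 c2. c1 \<in> same_subdiv_coeffs A c \<and> c2 \<in> same_subdiv_coeffs A c}
      \<union> {(\<lambda>w. if w \<in> subdiv_vert A c then 1 else 0)})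
    \<subseteq> cellwise_affine (subdiv_vert A c) (dual_polys A c)"
  using same_subdiv_coeffs_cellwise_affine indicator_cellwise_affine
    fs.subspace_diff[OF subspace_cellwise_affine]
  by (intro fs.span_minimal[OF _ subspace_cellwise_affine]) blast

lemma poly_vert_subset_subdiv_vert: "P \<in> dual_polys A c \<Longrightarrow> poly_vert P \<subseteq> subdiv_vert A c"
  by (auto simp: subdiv_vert_def)

lemma finite_subdiv_vert: "finite A \<Longrightarrow> finite (subdiv_vert A c)"
  by (metis UN_least finite_subset poly_vert_subset subdiv_vert_def)

lemma private_vertex_unique_cell:
  assumes "P \<in> dual_polys A c" "Q \<in> dual_polys A c"
    and "private_vertex A c P v" "private_vertex A c Q v"
  shows "P = Q"
  using assms lex_less_asym unfolding private_vertex_def by blast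

lemma parallelogram_vertex_zero:
  assumes "is_parallelogram P" and affine: "\<forall>u\<in>poly_vert P. f u = n \<bullet> rp u + \<gamma>"
    and "v \<in> poly_vert P" and others: "\<forall>u\<in>poly_vert P. u \<noteq> v \<longrightarrow> f u = 0"
  shows "f v = 0"
proof -
  obtain p q r s where pqrs: "poly_vert P = {p, q, r, s}" "card {p, q, r, s} = 4" "p + r = q + s"
    using assms(1) unfolding is_parallelogram_def by blast
  have "f p + f r = n \<bullet> rp (p + r) + 2 * \<gamma>"
    using affine pqrs(1) by (simp add: rp_add inner_add_right)
  also have "\<dots> = f q + f s"
    using affine pqrs(1,3) by (simp add: rp_add inner_add_right)
  finally have "f p + f r = f q + f s" .
  moreover have "p \<noteq> q" "p \<noteq> r" "p \<noteq> s" "q \<noteq> r" "q \<noteq> s" "r \<noteq> s"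
    using pqrs(2) by (auto simp: card_insert_if split: if_splits)
  ultimately show ?thesis
    using assms(3) others pqrs(1) by auto
qed

lemma affine_zero_on_poly_vert:
  assumes affine: "\<forall>u\<in>poly_vert P. f u = n \<bullet> rp u + \<gamma>"
    and "Z \<subseteq> poly_vert P" "3 \<le> card Z" "\<forall>u\<in>Z. f u = 0"
  shows "\<forall>u\<in>poly_vert P. f u = 0"
proof -
  obtain T where "T \<subseteq> Z" "card T = 3"
    using obtain_subset_with_card_n[OF assms(3)] by blast
  then obtain x y z where "{x, y, z} \<subseteq> Z" "x \<noteq> y" "x \<noteq> z" "y \<noteq> z"
    by (metis card_3_iff)
  moreover from this have "n \<bullet> rp t + \<gamma> = 0" if "t \<in> {x, y, z}" for t
    using that assms(2,4) affine by (metis subsetD)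
  ultimately have "n = 0"
    using assms(2) by (intro affine_zero_at_three_vertices[of x y z P]) auto
  with \<open>{x, y, z} \<subseteq> Z\<close> assms(2,4) affine show ?thesis
    by auto
qed

section \<open>Free vertices\<close>

locale ordered_cells =
  fixes A :: "(int \<times> int) set" and c :: "int \<times> int \<Rightarrow> real"
    and ds :: "(real \<times> real) set list" and k :: nat
  assumes finite_A: "finite A" and distinct_ds: "distinct ds" and set_ds: "set ds = dual_polys A c"
    and k_le_length: "k \<le> length ds"
    and small_cells: "\<forall>i < length ds. (i < k \<longleftrightarrow> is_triangle (ds ! i) \<or> is_parallelogram (ds ! i))"
begin

definition private_vert :: "(real \<times> real) set \<Rightarrow> int \<times> int"
  where "private_vert P = (SOME v. private_vertex A c P v)"

definition old_verts :: "nat \<Rightarrow> (int \<times> int) set"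
  where "old_verts i = (\<Union>j<i. poly_vert (ds ! j))"

definition new_verts :: "nat \<Rightarrow> (int \<times> int) set"
  where "new_verts i = poly_vert (ds ! i) - old_verts i"

definition kept_verts :: "nat \<Rightarrow> (int \<times> int) set"
  where "kept_verts i = (SOME K. K \<subseteq> new_verts i \<and>
     card K = min (card (new_verts i)) (3 - card (poly_vert (ds ! i) \<inter> old_verts i)))"

definition eliminated_verts :: "nat \<Rightarrow> (int \<times> int) set"
  where "eliminated_verts i = (if i < k then (if is_parallelogram (ds ! i) then {private_vert (ds ! i)} else {})
     else new_verts i - kept_verts i)"

definition free_verts :: "(int \<times> int) set"
  where "free_verts = subdiv_vert A c - (\<Union>i < length ds. eliminated_verts i)"

lemma nth_cell: "i < length ds \<Longrightarrow> ds ! i \<in> dual_polys A c"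
  using set_ds nth_mem by blast

lemma finite_poly_vert: "P \<in> dual_polys A c \<Longrightarrow> finite (poly_vert P)"
  using finite_subset[OF poly_vert_subset finite_A] .

lemma finite_dual_polys: "finite (dual_polys A c)"
  unfolding set_ds[symmetric] by simp

lemma private_vertex_private_vert:
  "P \<in> dual_polys A c \<Longrightarrow> is_parallelogram P \<Longrightarrow> private_vertex A c P (private_vert P)"
  unfolding private_vert_def using parallelogram_private_vertex[OF finite_A] by (rule someI_ex)

lemma parallelogram_index:
  assumes "P \<in> dual_polys A c" "is_parallelogram P"
  obtains i where "i < k" "ds ! i = P"
proof -
  obtain i where "i < length ds" "ds ! i = P"
    using assms(1) set_ds by (metis in_set_conv_nth)
  with assms(2) small_cells that show thesis by blast
qed

lemma kept_verts:
  assumes "i < length ds"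
  shows "kept_verts i \<subseteq> new_verts i"
    and "card (kept_verts i) = min (card (new_verts i)) (3 - card (poly_vert (ds ! i) \<inter> old_verts i))"
proof -
  let ?m = "min (card (new_verts i)) (3 - card (poly_vert (ds ! i) \<inter> old_verts i))"
  obtain K where "K \<subseteq> new_verts i" "card K = ?m"
    using obtain_subset_with_card_n[of ?m "new_verts i"] by auto
  then have "kept_verts i \<subseteq> new_verts i \<and> card (kept_verts i) = ?m"
    unfolding kept_verts_def by (rule someI[of _ K, OF conjI])
  then show "kept_verts i \<subseteq> new_verts i" "card (kept_verts i) = ?m"
    by auto
qed

lemma eliminated_subset: "i < length ds \<Longrightarrow> eliminated_verts i \<subseteq> poly_vert (ds ! i)"
  using private_vertex_private_vert[OF nth_cell] by (auto simp: eliminated_verts_def new_verts_def private_vertex_def)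

lemma eliminated_small: "i < k \<Longrightarrow> u \<in> eliminated_verts i \<Longrightarrow> is_parallelogram (ds ! i) \<and> u = private_vert (ds ! i)"
  by (auto simp: eliminated_verts_def split: if_splits)

lemma eliminated_large_not_old: "k \<le> j \<Longrightarrow> u \<in> eliminated_verts j \<Longrightarrow> u \<notin> old_verts j"
  by (simp add: eliminated_verts_def new_verts_def)

lemma eliminated_old: "j < i \<Longrightarrow> i \<le> length ds \<Longrightarrow> u \<in> eliminated_verts j \<Longrightarrow> u \<in> old_verts i"
  using eliminated_subset[of j] by (auto simp: old_verts_def)

lemma eliminated_disjoint:
  assumes "i < j" "j < length ds"
  shows "eliminated_verts i \<inter> eliminated_verts j = {}"
proof (rule ccontr)
  assume "eliminated_verts i \<inter> eliminated_verts j \<noteq> {}"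
  then obtain u where u: "u \<in> eliminated_verts i" "u \<in> eliminated_verts j"
    by blast
  show False
  proof (cases "j < k")
    case True
    have i: "i < length ds" "i < k"
      using assms True by auto
    have "is_parallelogram (ds ! i)" "u = private_vert (ds ! i)" "is_parallelogram (ds ! j)" "u = private_vert (ds ! j)"
      using eliminated_small[OF i(2) u(1)] eliminated_small[OF True u(2)] by auto
    then have "ds ! i = ds ! j"
      using private_vertex_unique_cell[OF nth_cell[OF i(1)] nth_cell[OF assms(2)]]
        private_vertex_private_vert[OF nth_cell[OF i(1)]] private_vertex_private_vert[OF nth_cell[OF assms(2)]]
      by metis
    with distinct_ds assms show False
      by (simp add: nth_eq_iff_index_eq)
  next
    case False
    then show False
      using eliminated_old[OF assms(1) _ u(1)] eliminated_large_not_old[OF _ u(2)] assms(2) by simp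
  qed
qed

lemma small_cell_vertex_not_free:
  assumes "i < k" "u \<in> poly_vert (ds ! i)" "u \<notin> free_verts"
  obtains j where "j < k" "is_parallelogram (ds ! j)" "u = private_vert (ds ! j)"
proof -
  have "i < length ds"
    using assms(1) k_le_length by simp
  then have "u \<in> subdiv_vert A c"
    using poly_vert_subset_subdiv_vert[OF nth_cell] assms(2) by blast
  then obtain j where "j < length ds" "u \<in> eliminated_verts j"
    using assms(3) by (auto simp: free_verts_def)
  moreover have "j < k"
  proof (rule ccontr)
    assume "\<not> j < k"
    then have "u \<notin> old_verts j" "i < j"
      using \<open>u \<in> eliminated_verts j\<close> eliminated_large_not_old assms(1) by auto
    with assms(2) show False
      by (auto simp: old_verts_def)
  qed
  ultimately show thesis
    using eliminated_small that by blast
qed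

lemma kept_verts_free:
  assumes "k \<le> i" "i < length ds" "u \<in> kept_verts i"
  shows "u \<in> free_verts"
proof -
  have new: "u \<in> poly_vert (ds ! i)" "u \<notin> old_verts i"
    using kept_verts(1)[OF assms(2)] assms(3) by (auto simp: new_verts_def)
  have "u \<notin> eliminated_verts j" if "j < length ds" for j
  proof
    assume u: "u \<in> eliminated_verts j"
    consider "j < i" | "j = i" | "i < j"
      by linarith
    then show False
    proof cases
      case 1
      then show False using eliminated_old[OF _ _ u] assms(2) new by auto
    next
      case 2
      then show False using u assms(1,3) by (simp add: eliminated_verts_def)
    next
      case 3
      then show False using eliminated_large_not_old[OF _ u] assms(1) new(1)
        by (auto simp: old_verts_def)
    qed
  qed
  with new(1) poly_vert_subset_subdiv_vert[OF nth_cell[OF assms(2)]] show ?thesis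
    by (auto simp: free_verts_def)
qed

definition cells_before :: "(real \<times> real) set \<Rightarrow> (real \<times> real) set set"
  where "cells_before P = {Q \<in> dual_polys A c. lex_less (dual_vertex A c Q) (dual_vertex A c P)}"

lemma card_cells_before_less:
  assumes "Q \<in> dual_polys A c" "lex_less (dual_vertex A c Q) (dual_vertex A c P)"
  shows "card (cells_before Q) < card (cells_before P)"
proof (rule psubset_card_mono)
  show "finite (cells_before P)"
    using finite_dual_polys by (simp add: cells_before_def)
  show "cells_before Q \<subset> cells_before P"
    using assms lex_less_trans lex_less_irrefl unfolding cells_before_def by blast
qed

context
  fixes f :: "int \<times> int \<Rightarrow> real"
  assumes f_affine: "f \<in> cellwise_affine (subdiv_vert A c) (dual_polys A c)"
    and f_free: "\<forall>b\<in>free_verts. f b = 0"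
begin

lemma affine_on_cell:
  "P \<in> dual_polys A c \<Longrightarrow> \<exists>n \<gamma>. \<forall>u\<in>poly_vert P. f u = n \<bullet> rp u + \<gamma>"
  by (rule cellwise_affineD(2)[OF f_affine])

text \<open>Induction along the lexicographic order of the dual vertices: the three other
  vertices of the parallelogram are free or private to lexicographically earlier cells.\<close>

lemma zero_at_private_vert:
  "P \<in> dual_polys A c \<Longrightarrow> is_parallelogram P \<Longrightarrow> f (private_vert P) = 0"
proof (induction "card (cells_before P)" arbitrary: P rule: less_induct)
  case less
  obtain i where i: "i < k" "ds ! i = P"
    using parallelogram_index[OF less.prems] .
  have others: "f u = 0" if u: "u \<in> poly_vert P" "u \<noteq> private_vert P" for u
  proof (cases "u \<in> free_verts")
    case False
    then obtain j where j: "j < k" "is_parallelogram (ds ! j)" "u = private_vert (ds ! j)"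
      using small_cell_vertex_not_free[OF i(1)] u(1) i(2) by blast
    have cell_j: "ds ! j \<in> dual_polys A c"
      using j(1) k_le_length nth_cell by simp
    have "lex_less (dual_vertex A c (ds ! j)) (dual_vertex A c P)"
      using private_vertex_private_vert[OF cell_j j(2)] less.prems(1) u j(3)
      unfolding private_vertex_def by blast
    then show ?thesis
      using less.hyps[OF card_cells_before_less[OF cell_j] cell_j j(2)] j(3) by simp
  qed (use f_free in blast)
  obtain n \<gamma> where affine: "\<forall>u\<in>poly_vert P. f u = n \<bullet> rp u + \<gamma>"
    using affine_on_cell[OF less.prems(1)] by blast
  have "private_vert P \<in> poly_vert P"
    using private_vertex_private_vert[OF less.prems] by (simp add: private_vertex_def)
  then show ?case
    using parallelogram_vertex_zero[OF less.prems(2) affine] others by blast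
qed

lemma zero_on_small_cell:
  assumes "i < k" "u \<in> poly_vert (ds ! i)"
  shows "f u = 0"
proof (cases "u \<in> free_verts")
  case False
  then obtain j where "j < k" "is_parallelogram (ds ! j)" "u = private_vert (ds ! j)"
    using small_cell_vertex_not_free[OF assms] by blast
  moreover have "ds ! j \<in> dual_polys A c"
    using \<open>j < k\<close> k_le_length nth_cell by simp
  ultimately show ?thesis
    using zero_at_private_vert by blast
qed (use f_free in blast)

lemma zero_on_cell: "i < length ds \<Longrightarrow> u \<in> poly_vert (ds ! i) \<Longrightarrow> f u = 0"
proof (induction i arbitrary: u rule: less_induct)
  case (less i)
  show ?case
  proof (cases "i < k")
    case True
    then show ?thesis
      using zero_on_small_cell less.prems(2) by blast
  next
    case False
    define Z where "Z = (poly_vert (ds ! i) \<inter> old_verts i) \<union> kept_verts i"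
    have fin_new: "finite (new_verts i)"
      using finite_poly_vert[OF nth_cell[OF less.prems(1)]] by (simp add: new_verts_def)
    have Z_sub: "Z \<subseteq> poly_vert (ds ! i)"
      using kept_verts(1)[OF less.prems(1)] by (auto simp: Z_def new_verts_def)
    have Z_zero: "\<forall>u\<in>Z. f u = 0"
      using less.IH less.prems(1) kept_verts_free[OF _ less.prems(1)] f_free False
      by (auto simp: Z_def old_verts_def)
    have card_Z: "card Z = card (poly_vert (ds ! i) \<inter> old_verts i) + card (kept_verts i)"
      unfolding Z_def using kept_verts(1)[OF less.prems(1)] fin_new
        finite_poly_vert[OF nth_cell[OF less.prems(1)]]
      by (intro card_Un_disjoint) (auto simp: new_verts_def intro: finite_subset)
    obtain n \<gamma> where affine: "\<forall>u\<in>poly_vert (ds ! i). f u = n \<bullet> rp u + \<gamma>"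
      using affine_on_cell[OF nth_cell[OF less.prems(1)]] by blast
    show ?thesis
    proof (cases "3 \<le> card Z")
      case True
      then show ?thesis
        using affine_zero_on_poly_vert[OF affine Z_sub True Z_zero] less.prems(2) by blast
    next
      case False
      then have "card (kept_verts i) = card (new_verts i)"
        using card_Z kept_verts(2)[OF less.prems(1)] by (auto simp: min_def split: if_splits)
      then have "kept_verts i = new_verts i"
        using card_subset_eq[OF fin_new kept_verts(1)[OF less.prems(1)]] by simp
      then have "poly_vert (ds ! i) \<subseteq> Z"
        by (auto simp: Z_def new_verts_def)
      then show ?thesis
        using Z_zero less.prems(2) by blast
    qed
  qed
qed

lemma zero_if_zero_on_free_verts: "f = 0"
proof
  fix w
  show "f w = 0 w"
  proof (cases "w \<in> subdiv_vert A c")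
    case True
    then obtain P where "P \<in> dual_polys A c" "w \<in> poly_vert P"
      by (auto simp: subdiv_vert_def)
    then show ?thesis
      using zero_on_cell set_ds by (metis in_set_conv_nth zero_fun_apply)
  next
    case False
    then show ?thesis
      using cellwise_affineD(1)[OF f_affine] by simp
  qed
qed

end

lemma finite_free_verts: "finite free_verts"
  using finite_subdiv_vert[OF finite_A] by (simp add: free_verts_def)

lemma card_eliminated_small:
  assumes "i < k"
  shows "int (card (eliminated_verts i)) = int (card (poly_vert (ds ! i))) - 3"
proof (cases "is_parallelogram (ds ! i)")
  case True
  then obtain p q r s where "poly_vert (ds ! i) = {p, q, r, s}" "card {p, q, r, s} = 4"
    unfolding is_parallelogram_def by blast
  with True assms show ?thesis
    by (simp add: eliminated_verts_def)
next
  case False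
  moreover have "i < length ds"
    using assms k_le_length by simp
  ultimately have "is_triangle (ds ! i)"
    using small_cells assms by blast
  with False assms show ?thesis
    by (simp add: eliminated_verts_def is_triangle_def)
qed

lemma card_eliminated_large:
  assumes "k \<le> i" "i < length ds"
  shows "int (card (poly_vert (ds ! i))) - max 3 (int (card (poly_vert (ds ! i) \<inter> old_verts i)))
    \<le> int (card (eliminated_verts i))"
proof -
  have fin: "finite (poly_vert (ds ! i))"
    using finite_poly_vert[OF nth_cell[OF assms(2)]] .
  have "card (poly_vert (ds ! i)) = card (poly_vert (ds ! i) \<inter> old_verts i) + card (new_verts i)"
    unfolding new_verts_def by (rule card_Int_Diff[OF fin])
  moreover have "card (eliminated_verts i) = card (new_verts i) - card (kept_verts i)"
    using assms(1) kept_verts(1)[OF assms(2)] fin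
    by (simp add: eliminated_verts_def card_Diff_subset new_verts_def finite_subset)
  ultimately show ?thesis
    using kept_verts(2)[OF assms(2)] by (auto simp: min_def max_def of_nat_diff)
qed

lemma card_free_verts:
  "int (card free_verts) = int (card (subdiv_vert A c)) - (\<Sum>i<length ds. int (card (eliminated_verts i)))"
proof -
  let ?E = "\<Union>i<length ds. eliminated_verts i"
  have E_sub: "?E \<subseteq> subdiv_vert A c"
    using eliminated_subset poly_vert_subset_subdiv_vert[OF nth_cell] by blast
  have fin: "finite (eliminated_verts i)" if "i < length ds" for i
    using eliminated_subset[OF that] finite_poly_vert[OF nth_cell[OF that]] by (rule finite_subset)
  have "card ?E = (\<Sum>i<length ds. card (eliminated_verts i))"
    using fin eliminated_disjoint by (intro card_UN_disjoint) (auto simp: nat_neq_iff Int_commute)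
  moreover have "card free_verts = card (subdiv_vert A c) - card ?E"
    unfolding free_verts_def using E_sub finite_subdiv_vert[OF finite_A]
    by (intro card_Diff_subset) (auto intro: finite_subset)
  moreover have "card ?E \<le> card (subdiv_vert A c)"
    using E_sub finite_subdiv_vert[OF finite_A] by (rule card_mono[rotated])
  ultimately show ?thesis
    by (simp add: of_nat_diff flip: of_nat_sum)
qed

lemma card_free_verts_le:
  "int (card free_verts) \<le> int (card (subdiv_vert A c))
     - (\<Sum>i < k. int (card (poly_vert (ds ! i))) - 3)
     - (\<Sum>i \<in> {k..<length ds}. int (card (poly_vert (ds ! i)))
           - max 3 (int (card (poly_vert (ds ! i) \<inter> (\<Union>j < i. poly_vert (ds ! j))))))"
proof -
  have "(\<Sum>i<length ds. int (card (eliminated_verts i)))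
      = (\<Sum>i<k. int (card (eliminated_verts i))) + (\<Sum>i\<in>{k..<length ds}. int (card (eliminated_verts i)))"
    using k_le_length by (metis atLeast0LessThan sum.atLeastLessThan_concat zero_le)
  moreover have "(\<Sum>i<k. int (card (eliminated_verts i))) = (\<Sum>i<k. int (card (poly_vert (ds ! i))) - 3)"
    by (rule sum.cong) (auto simp: card_eliminated_small)
  moreover have "(\<Sum>i\<in>{k..<length ds}. int (card (poly_vert (ds ! i)))
        - max 3 (int (card (poly_vert (ds ! i) \<inter> old_verts i))))
      \<le> (\<Sum>i\<in>{k..<length ds}. int (card (eliminated_verts i)))"
    by (rule sum_mono) (auto intro: card_eliminated_large)
  ultimately show ?thesis
    using card_free_verts unfolding old_verts_def by linarith
qed

end

theorem mainTheorem5: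
  fixes A :: "(int \<times> int) set" and c :: "int \<times> int \<Rightarrow> real"
    and ds :: "(real \<times> real) set list" and k :: nat
  assumes "finite A"
    and "aff_dim (convex hull (rp ` A)) = 2"
    and "distinct ds" and "set ds = dual_polys A c"
    and "k \<le> length ds"
    and "\<forall>i < length ds. (i < k \<longleftrightarrow> is_triangle (ds ! i) \<or> is_parallelogram (ds ! i))"
  shows "trop_rank A c \<le>
           int (card (subdiv_vert A c)) - 1
           - (\<Sum>i < k. int (card (poly_vert (ds ! i))) - 3)
           - (\<Sum>i \<in> {k..<length ds}. int (card (poly_vert (ds ! i)))
                 - max 3 (int (card (poly_vert (ds ! i) \<inter> (\<Union>j < i. poly_vert (ds ! j))))))"
proof -
  interpret ordered_cells A c ds k
    using assms by unfold_locales auto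
  let ?S = "{c1 - c2 | c1 c2. c1 \<in> same_subdiv_coeffs A c \<and> c2 \<in> same_subdiv_coeffs A c}
      \<union> {(\<lambda>w. if w \<in> subdiv_vert A c then 1 else 0)}"
  have "fs.dim ?S \<le> card free_verts"
    using finite_free_verts span_rank_generators_subset zero_if_zero_on_free_verts
    by (intro dim_le_card_of_determining_set) blast+
  then show ?thesis
    using card_free_verts_le unfolding trop_rank_def Let_def by linarith
qed

end
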